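(* Let $M_{2,2}$ be the lattice obtained from $A_1^{\oplus 12}=\langle v_1,\dots,v_{12}\rangle$ ($v_i^2=-2$, $v_i\cdot v_j=0$ for $i\ne j$) by adding the generators $(v_1+\dots+v_8)/2$ and $(v_5+\dots+v_{12})/2$, with discriminant group $A_{M_{2,2}}$ and discriminant form $q:A_{M_{2,2}}\to\mathbb Q/2\mathbb Z$. Consider the equivalence relation on $A_{M_{2,2}}$ where $r\sim s$ if $\bar\psi(r)=s$ for the isometry $\bar\psi$ of $A_{M_{2,2}}$ induced by some $\psi\in O(M_{2,2})$. Then the non-trivial equivalence classes, recorded as triples (order of the element, value of $q$, cardinality of the class), are exactly: $(2,0,54)$, $(2,0,1)$, $(2,1/2,64)$, $(2,1,54)$, $(2,1,18)$, $(2,3/2,64)$.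
   Context: For an even lattice $S$, $A_S=S^\vee/S$ and $q_S(x+S)=x^2\bmod 2\mathbb Z$. The lattice $M_{2,2}$ is the exceptional lattice of the symplectic action of $(\mathbb Z/2\mathbb Z)^2$ on a K3 surface (the minimal primitive sublattice of the second cohomology of the resolved quotient containing the 12 exceptional curves). *)

theory Defs
  imports "HOL-Analysis.Finite_Cartesian_Product" "HOL-Library.Multiset"
begin

text \<open>Vectors x :: rat^12 stand for the rational combination sum_i x$i v_i of the basis
  v_1..v_12 of A_1^12 (index i :: 12 ranges over 0..11, so v_k corresponds to index k-1).\<close>

definition bform :: "rat^12 \<Rightarrow> rat^12 \<Rightarrow> rat" where
  "bform x y = - 2 * (\<Sum>i\<in>UNIV. x $ i * y $ i)"

definition h1 :: "rat^12" where
  "h1 = (\<chi> i. if i < 8 then 1/2 else 0)"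

definition h2 :: "rat^12" where
  "h2 = (\<chi> i. if 4 \<le> i then 1/2 else 0)"

definition M22 :: "(rat^12) set" where
  "M22 = {(\<chi> i. of_int (a i)) + of_int m *s h1 + of_int n *s h2 | a m n. True}"

definition M22dual :: "(rat^12) set" where
  "M22dual = {y. \<forall>x\<in>M22. bform x y \<in> \<int>}"

definition coset :: "rat^12 \<Rightarrow> (rat^12) set" where
  "coset y = (\<lambda>m. y + m) ` M22"

definition Adisc :: "(rat^12) set set" where
  "Adisc = coset ` M22dual"

definition elem_ord :: "(rat^12) set \<Rightarrow> nat" where
  "elem_ord r = (LEAST n::nat. 0 < n \<and> (\<forall>y\<in>r. of_nat n *s y \<in> M22))"

text \<open>Value in Q/2Z, represented by its representative in [0,2).\<close>
definition mod2 :: "rat \<Rightarrow> rat" where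
  "mod2 t = t - 2 * of_int \<lfloor>t / 2\<rfloor>"

definition qdisc :: "(rat^12) set \<Rightarrow> rat" where
  "qdisc r = mod2 (bform (SOME y. y \<in> r) (SOME y. y \<in> r))"

definition OM22 :: "(rat^12^12) set" where
  "OM22 = {A. (\<lambda>x. A *v x) ` M22 = M22 \<and> (\<forall>x y. bform (A *v x) (A *v y) = bform x y)}"

definition disc_rel :: "(rat^12) set \<Rightarrow> (rat^12) set \<Rightarrow> bool" where
  "disc_rel r s = (\<exists>A\<in>OM22. \<exists>y\<in>r. s = coset (A *v y))"

definition disc_class :: "(rat^12) set \<Rightarrow> (rat^12) set set" where
  "disc_class r = {s \<in> Adisc. disc_rel r s}"

definition nontrivial_classes :: "(rat^12) set set set" where
  "nontrivial_classes = disc_class ` (Adisc - {coset 0})"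

definition class_triple :: "(rat^12) set set \<Rightarrow> nat \<times> rat \<times> nat" where
  "class_triple C = (elem_ord (SOME r. r \<in> C), qdisc (SOME r. r \<in> C), card C)"

end

(*
  Every class of the discriminant group has a half-integral representative y, and the class
  depends only on the support S of y (its non-integral coordinates) modulo the glue code
  M22/Z^12, whose nonzero words are the complements of the three blocks {1..4}, {5..8}, {9..12}.
  The roots of M22 are the vectors +-v_i, so every isometry is a signed permutation, and it
  permutes the blocks because it preserves the glue code; conversely every permutation of the
  coordinates that permutes the blocks is an isometry.  Hence the orbit of S is determined by the
  multiset of its block weights up to complementing two blocks, which leaves seven types.  The
  orbit sizes follow by counting supports with prescribed block weights with binomial
  coefficients and dividing by the four glue words, and q(y) = -|S|/2 mod 2.
*)
theory Submission
  imports Defs "HOL-Combinatorics.Permutations"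
begin

lemma UNIV_12: "(UNIV :: 12 set) = {0, 1, 2, 3, 4, 5, 6, 7, 8, 9, 10, 11}"
proof -
  have "card {0, 1, 2, 3, 4, 5, 6, 7, 8, 9, 10, 11 :: 12} = CARD(12)" by simp
  then show ?thesis
    using card_subset_eq[OF finite_class.finite_UNIV subset_UNIV, of "{0, 1, 2, 3, 4, 5, 6, 7, 8, 9, 10, 11 :: 12}"]
    by simp
qed

lemma all_12:
  "(\<forall>i::12. P i) \<longleftrightarrow> P 0 \<and> P 1 \<and> P 2 \<and> P 3 \<and> P 4 \<and> P 5 \<and> P 6 \<and> P 7 \<and> P 8 \<and> P 9 \<and> P 10 \<and> P 11"
  by (metis UNIV_12 UNIV_I insert_iff empty_iff)

lemmas numeral_12_order = less_bit0_def less_eq_bit0_def bit0.Rep_numeral bit0.Rep_0 bit0.Rep_1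

definition block :: "12 \<Rightarrow> nat" where
  "block i = (if i < 4 then 0 else if i < 8 then 1 else 2)"

lemma block_less_3: "block i < 3"
  by (simp add: block_def)

lemma block_range: "block i \<in> {0, 1, 2}"
  by (simp add: block_def)

lemma blocks_explicit:
  "{i. block i = 0} = {0, 1, 2, 3}" "{i. block i = 1} = {4, 5, 6, 7}" "{i. block i = 2} = {8, 9, 10, 11}"
  unfolding set_eq_iff mem_Collect_eq all_12 by (simp_all add: block_def numeral_12_order)

lemma card_block: "k < 3 \<Longrightarrow> card {i. block i = k} = 4"
proof -
  assume "k < 3"
  then have "k = 0 \<or> k = 1 \<or> k = 2" by auto
  then show ?thesis using blocks_explicit by (elim disjE) simp_all
qed

lemma less_8_iff_block: "i < 8 \<longleftrightarrow> block i \<noteq> 2"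
  and ge_4_iff_block: "4 \<le> i \<longleftrightarrow> block i \<noteq> 0"
proof -
  have "\<forall>i::12. (i < 8 \<longleftrightarrow> block i \<noteq> 2) \<and> (4 \<le> i \<longleftrightarrow> block i \<noteq> 0)"
    unfolding all_12 by (simp add: block_def numeral_12_order)
  then show "i < 8 \<longleftrightarrow> block i \<noteq> 2" "4 \<le> i \<longleftrightarrow> block i \<noteq> 0" by blast+
qed

lemma block_values: "block 0 = 0" "block 4 = 1" "block 8 = 2"
  by (simp_all add: block_def numeral_12_order)

lemma block_surj: "k < 3 \<Longrightarrow> \<exists>i. block i = k"
proof -
  assume "k < 3"
  then have "k = 0 \<or> k = 1 \<or> k = 2" by auto
  then show ?thesis using block_values by auto
qed

section \<open>The lattice and its dual\<close>

lemma Ints_half_iff: "(of_int s / 2 :: 'a :: field_char_0) \<in> \<int> \<longleftrightarrow> even s"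
proof
  assume "(of_int s / 2 :: 'a) \<in> \<int>"
  then obtain j where "(of_int s / 2 :: 'a) = of_int j" by (auto elim: Ints_cases)
  then have "(of_int s :: 'a) = of_int (2 * j)" by (simp add: field_simps)
  then show "even s" by (simp only: of_int_eq_iff) simp
qed (auto simp: Ints_def)

lemma add_half_integers_Ints_iff:
  fixes a b :: "'a :: field_char_0"
  assumes "2 * a \<in> \<int>" "2 * b \<in> \<int>"
  shows "a + b \<in> \<int> \<longleftrightarrow> (a \<in> \<int> \<longleftrightarrow> b \<in> \<int>)"
proof -
  obtain s t where "2 * a = of_int s" "2 * b = of_int t" using assms by (auto elim!: Ints_cases)
  then have "a = of_int s / 2" "b = of_int t / 2" "a + b = of_int (s + t) / 2"
    by (simp_all add: field_simps)
  then show ?thesis by (simp only: Ints_half_iff) auto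
qed

lemma sum_Ints_iff_even_card:
  fixes t :: "'i \<Rightarrow> 'a :: field_char_0"
  assumes "finite S" "\<forall>i\<in>S. 2 * t i \<in> \<int>"
  shows "(\<Sum>i\<in>S. t i) \<in> \<int> \<longleftrightarrow> even (card {i\<in>S. t i \<notin> \<int>})"
  using assms
proof (induction S rule: finite_induct)
  case (insert x F)
  have "2 * (\<Sum>i\<in>F. t i) \<in> \<int>"
    using insert by (simp add: sum_distrib_left Ints_sum)
  moreover have "{i \<in> insert x F. t i \<notin> \<int>}
      = (if t x \<in> \<int> then {i\<in>F. t i \<notin> \<int>} else insert x {i\<in>F. t i \<notin> \<int>})"
    by auto
  ultimately show ?case
    using insert add_half_integers_Ints_iff[of "t x" "\<Sum>i\<in>F. t i"] by auto
qed simp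

definition half_integral :: "rat^'n \<Rightarrow> bool" where
  "half_integral y \<longleftrightarrow> (\<forall>i. 2 * y $ i \<in> \<int>)"

definition odd_coords :: "rat^'n \<Rightarrow> 'n set" where
  "odd_coords y = {i. y $ i \<notin> \<int>}"

definition half_indicator :: "'n set \<Rightarrow> rat^'n" where
  "half_indicator S = (\<chi> i. if i \<in> S then 1/2 else 0)"

lemma half_not_Ints: "(1/2 :: rat) \<notin> \<int>"
  using Ints_half_iff[of 1] by simp

lemma half_integral_half_indicator: "half_integral (half_indicator S)"
  by (simp add: half_integral_def half_indicator_def)

lemma odd_coords_half_indicator: "odd_coords (half_indicator S) = S"
  using half_not_Ints by (auto simp: odd_coords_def half_indicator_def)

lemma half_integral_if_Ints: "(\<And>i. y $ i \<in> \<int>) \<Longrightarrow> half_integral y"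
  unfolding half_integral_def by (metis Ints_add mult_2)

lemma half_integral_add: "half_integral y \<Longrightarrow> half_integral z \<Longrightarrow> half_integral (y + z)"
  by (simp add: half_integral_def distrib_left)

lemma half_integral_diff: "half_integral y \<Longrightarrow> half_integral z \<Longrightarrow> half_integral (y - z)"
  by (simp add: half_integral_def right_diff_distrib)

lemma odd_coords_diff:
  assumes "half_integral y" "half_integral z"
  shows "odd_coords (y - z) = sym_diff (odd_coords y) (odd_coords z)"
proof -
  have "y $ i + - z $ i \<in> \<int> \<longleftrightarrow> (y $ i \<in> \<int> \<longleftrightarrow> z $ i \<in> \<int>)" for i
    using assms add_half_integers_Ints_iff[of "y $ i" "- z $ i"] by (simp add: half_integral_def)
  then show ?thesis by (auto simp: odd_coords_def)
qed

text \<open>The glue code \<open>M22/\<int>\<^sup>1\<^sup>2\<close>, each vector recorded by its set of non-integral coordinates.\<close>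
definition glue_code :: "12 set set" where
  "glue_code = insert {} {{i. block i \<noteq> k} | k. k < 3}"

lemma block_complement_in_glue_code: "k < 3 \<Longrightarrow> {i. block i \<noteq> k} \<in> glue_code"
  unfolding glue_code_def by blast

lemma empty_in_glue_code: "{} \<in> glue_code"
  by (simp add: glue_code_def)

lemma glue_code_union_of_blocks: "X \<in> glue_code \<Longrightarrow> block i = block j \<Longrightarrow> i \<in> X \<longleftrightarrow> j \<in> X"
  unfolding glue_code_def by auto

lemma same_block_iff_glue_code: "block i = block j \<longleftrightarrow> (\<forall>c\<in>glue_code. i \<in> c \<longleftrightarrow> j \<in> c)"
proof
  assume "\<forall>c\<in>glue_code. i \<in> c \<longleftrightarrow> j \<in> c"
  moreover have "{l. block l \<noteq> block j} \<in> glue_code" by (rule block_complement_in_glue_code[OF block_less_3])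
  ultimately have "i \<in> {l. block l \<noteq> block j} \<longleftrightarrow> j \<in> {l. block l \<noteq> block j}" by (rule bspec)
  then show "block i = block j" by simp
qed (use glue_code_union_of_blocks in blast)

lemma glue_code_sym_diff:
  assumes "X \<in> glue_code" "Y \<in> glue_code"
  shows "sym_diff X Y \<in> glue_code"
proof -
  have "sym_diff {i. block i \<noteq> k} {i. block i \<noteq> l} \<in> glue_code" if "k < 3" "l < 3" for k l
  proof (cases "k = l")
    case False
    have "(b \<noteq> k) \<noteq> (b \<noteq> l) \<longleftrightarrow> b \<noteq> 3 - k - l" if "b < 3" for b
      using \<open>k < 3\<close> \<open>l < 3\<close> False that by (auto; presburger)
    then have "sym_diff {i. block i \<noteq> k} {i. block i \<noteq> l} = {i. block i \<noteq> 3 - k - l}"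
      using block_less_3 by blast
    moreover have "3 - k - l < 3" using False by simp
    ultimately show ?thesis using block_complement_in_glue_code by simp
  qed (simp add: glue_code_def)
  with assms show ?thesis unfolding glue_code_def by auto
qed

lemma card_glue_code: "card glue_code = 4"
proof -
  have inj: "inj_on (\<lambda>k. {i. block i \<noteq> k}) {..<3}"
  proof (rule inj_onI)
    fix k l :: nat assume "k \<in> {..<3}" "{i. block i \<noteq> k} = {i. block i \<noteq> l}"
    moreover obtain i where "block i = k" using \<open>k \<in> {..<3}\<close> block_surj by auto
    ultimately show "k = l" by (metis (mono_tags) mem_Collect_eq)
  qed
  have "{i. block i \<noteq> k} \<noteq> {}" for k
  proof -
    have "0 \<in> {i. block i \<noteq> k} \<or> 4 \<in> {i. block i \<noteq> k}" using block_values by auto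
    then show ?thesis by (metis empty_iff)
  qed
  then have "{} \<notin> (\<lambda>k. {i. block i \<noteq> k}) ` {..<3}" by (metis (no_types, lifting) imageE)
  then have "card (insert {} ((\<lambda>k. {i. block i \<noteq> k}) ` {..<3})) = 4"
    using inj by (simp add: card_image)
  moreover have "glue_code = insert {} ((\<lambda>k. {i. block i \<noteq> k}) ` {..<3})"
    unfolding glue_code_def by auto
  ultimately show ?thesis by (simp only:)
qed

lemma h1_eq: "h1 = half_indicator {i. block i \<noteq> 2}"
  by (simp add: h1_def half_indicator_def less_8_iff_block)

lemma h2_eq: "h2 = half_indicator {i. block i \<noteq> 0}"
  by (simp add: h2_def half_indicator_def ge_4_iff_block)

lemma odd_coords_glue_vector:
  "odd_coords (of_int m *s h1 + of_int n *s h2) = {i. (odd m \<and> block i \<noteq> 2) \<noteq> (odd n \<and> block i \<noteq> 0)}"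
proof -
  have entry: "(of_int m *s h1 + of_int n *s h2) $ i
      = of_int ((if block i \<noteq> 2 then m else 0) + (if block i \<noteq> 0 then n else 0)) / 2" for i
    by (simp add: h1_eq h2_eq half_indicator_def add_divide_distrib)
  have "(of_int m *s h1 + of_int n *s h2) $ i \<notin> \<int> \<longleftrightarrow> (odd m \<and> block i \<noteq> 2) \<noteq> (odd n \<and> block i \<noteq> 0)"
    for i unfolding entry Ints_half_iff by auto
  then show ?thesis unfolding odd_coords_def by blast
qed

lemma glue_code_iff: "X \<in> glue_code \<longleftrightarrow> (\<exists>m n. X = odd_coords (of_int m *s h1 + of_int n *s h2))"
proof -
  have "odd_coords (of_int m *s h1 + of_int n *s h2)
      = (if odd m then if odd n then {i. block i \<noteq> 1} else {i. block i \<noteq> 2}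
         else if odd n then {i. block i \<noteq> 0} else {})" for m n :: int
    unfolding odd_coords_glue_vector using block_less_3
    by (auto simp: less_Suc_eq numeral_3_eq_3 numeral_2_eq_2)
  moreover have "X \<in> glue_code \<longleftrightarrow> X = {} \<or> X = {i. block i \<noteq> 0} \<or> X = {i. block i \<noteq> 1} \<or> X = {i. block i \<noteq> 2}"
    unfolding glue_code_def by (auto simp: less_Suc_eq numeral_3_eq_3 numeral_2_eq_2)
  ultimately show ?thesis
    by (smt (verit) odd_one even_zero)
qed

lemma half_integral_glue_vector: "half_integral (of_int m *s h1 + of_int n *s h2)"
  by (simp add: half_integral_def h1_eq h2_eq half_indicator_def)

lemma M22_iff_shift_integral:
  "x \<in> M22 \<longleftrightarrow> (\<exists>m n. \<forall>i. (x - (of_int m *s h1 + of_int n *s h2)) $ i \<in> \<int>)"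
proof
  assume "x \<in> M22"
  then obtain a m n where "x = (\<chi> i. of_int (a i)) + of_int m *s h1 + of_int n *s h2"
    unfolding M22_def by blast
  then have "\<forall>i. (x - (of_int m *s h1 + of_int n *s h2)) $ i \<in> \<int>" by simp
  then show "\<exists>m n. \<forall>i. (x - (of_int m *s h1 + of_int n *s h2)) $ i \<in> \<int>" by blast
next
  assume "\<exists>m n. \<forall>i. (x - (of_int m *s h1 + of_int n *s h2)) $ i \<in> \<int>"
  then obtain m n where "\<forall>i. \<exists>a. (x - (of_int m *s h1 + of_int n *s h2)) $ i = of_int a"
    by (metis Ints_cases)
  then obtain a where "\<And>i. (x - (of_int m *s h1 + of_int n *s h2)) $ i = of_int (a i)" by metis
  then have "x = (\<chi> i. of_int (a i)) + of_int m *s h1 + of_int n *s h2"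
    by (simp add: vec_eq_iff algebra_simps)
  then show "x \<in> M22" unfolding M22_def by blast
qed

lemma M22_iff: "x \<in> M22 \<longleftrightarrow> half_integral x \<and> odd_coords x \<in> glue_code"
proof
  assume "x \<in> M22"
  then obtain m n where int: "\<forall>i. (x - (of_int m *s h1 + of_int n *s h2)) $ i \<in> \<int>"
    unfolding M22_iff_shift_integral by blast
  let ?v = "of_int m *s h1 + of_int n *s h2"
  have "half_integral (x - ?v)" using int by (simp add: half_integral_if_Ints)
  then have "half_integral (x - ?v + ?v)"
    using half_integral_add half_integral_glue_vector by blast
  then have "half_integral x" by simp
  moreover have "odd_coords (x - ?v) = {}" using int by (simp add: odd_coords_def)
  then have "odd_coords x = odd_coords ?v"
    using odd_coords_diff[OF \<open>half_integral x\<close> half_integral_glue_vector] by auto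
  ultimately show "half_integral x \<and> odd_coords x \<in> glue_code"
    unfolding glue_code_iff by blast
next
  assume "half_integral x \<and> odd_coords x \<in> glue_code"
  then obtain m n where x: "half_integral x" "odd_coords x = odd_coords (of_int m *s h1 + of_int n *s h2)"
    unfolding glue_code_iff by blast
  then have "odd_coords (x - (of_int m *s h1 + of_int n *s h2)) = {}"
    using odd_coords_diff[OF x(1) half_integral_glue_vector] by simp
  then show "x \<in> M22" unfolding M22_iff_shift_integral odd_coords_def by blast
qed

lemma M22_half_integral: "x \<in> M22 \<Longrightarrow> half_integral x"
  by (simp add: M22_iff)

lemma M22_diff: "x \<in> M22 \<Longrightarrow> z \<in> M22 \<Longrightarrow> x - z \<in> M22"
  by (simp add: M22_iff half_integral_diff odd_coords_diff glue_code_sym_diff)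

lemma M22_zero: "0 \<in> M22"
  by (simp add: M22_iff half_integral_def odd_coords_def glue_code_def)

lemma M22_add: "x \<in> M22 \<Longrightarrow> z \<in> M22 \<Longrightarrow> x + z \<in> M22"
  using M22_diff[OF _ M22_diff[OF M22_zero]] by fastforce

lemma M22_half_indicator: "half_indicator X \<in> M22 \<longleftrightarrow> X \<in> glue_code"
  by (simp add: M22_iff half_integral_half_indicator odd_coords_half_indicator)

lemma axis_M22: "axis i 1 \<in> M22"
  by (simp add: M22_iff half_integral_def odd_coords_def axis_def glue_code_def)

lemma bform_half_indicator: "bform (half_indicator S) y = - (\<Sum>i\<in>S. y $ i)"
proof -
  have "half_indicator S $ i * y $ i = (if i \<in> S then y $ i / 2 else 0)" for i
    by (simp add: half_indicator_def)
  then have "(\<Sum>i\<in>UNIV. half_indicator S $ i * y $ i) = (\<Sum>i\<in>S. y $ i) / 2"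
    by (simp add: sum.If_cases sum_divide_distrib)
  then show ?thesis by (simp add: bform_def)
qed

lemma bform_axis: "bform (axis i 1) y = - 2 * y $ i"
proof -
  have "axis i 1 $ j * y $ j = (if j = i then y $ j else 0)" for j
    by (simp add: axis_def)
  then show ?thesis by (simp add: bform_def)
qed

lemma bform_lattice_vector:
  "bform ((\<chi> i. of_int (a i)) + of_int m *s h1 + of_int n *s h2) y
     = (\<Sum>i\<in>UNIV. of_int (a i) * (- 2 * y $ i)) + of_int m * bform h1 y + of_int n * bform h2 y"
  unfolding bform_def by (simp add: algebra_simps sum.distrib sum_distrib_left)

lemma M22dual_iff:
  "y \<in> M22dual \<longleftrightarrow> half_integral y \<and> even (card {i \<in> odd_coords y. block i \<noteq> 2})
      \<and> even (card {i \<in> odd_coords y. block i \<noteq> 0})"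
proof -
  have "y \<in> M22dual \<longleftrightarrow> (\<forall>i. bform (axis i 1) y \<in> \<int>) \<and> bform h1 y \<in> \<int> \<and> bform h2 y \<in> \<int>"
  proof
    assume "y \<in> M22dual"
    moreover have "h1 \<in> M22" "h2 \<in> M22"
      unfolding h1_eq h2_eq M22_half_indicator by (rule block_complement_in_glue_code, simp)+
    ultimately show "(\<forall>i. bform (axis i 1) y \<in> \<int>) \<and> bform h1 y \<in> \<int> \<and> bform h2 y \<in> \<int>"
      using axis_M22 unfolding M22dual_def by blast
  next
    assume gens: "(\<forall>i. bform (axis i 1) y \<in> \<int>) \<and> bform h1 y \<in> \<int> \<and> bform h2 y \<in> \<int>"
    show "y \<in> M22dual" unfolding M22dual_def
    proof (intro CollectI ballI)
      fix x assume "x \<in> M22"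
      then obtain a m n where "x = (\<chi> i. of_int (a i)) + of_int m *s h1 + of_int n *s h2"
        unfolding M22_def by blast
      then show "bform x y \<in> \<int>"
        using gens by (simp add: bform_lattice_vector bform_axis Ints_sum Ints_add Ints_mult)
    qed
  qed
  moreover have "(\<forall>i. bform (axis i 1) y \<in> \<int>) \<longleftrightarrow> half_integral y"
    by (simp add: bform_axis half_integral_def)
  moreover have "half_integral y \<Longrightarrow> bform (half_indicator S) y \<in> \<int> \<longleftrightarrow> even (card {i \<in> odd_coords y. i \<in> S})"
    for S using sum_Ints_iff_even_card[of S "\<lambda>i. y $ i"]
    by (simp add: bform_half_indicator half_integral_def odd_coords_def conj_commute)
  ultimately show ?thesis by (auto simp: h1_eq h2_eq)
qed

lemma mem_coset_iff: "w \<in> coset y \<longleftrightarrow> w - y \<in> M22"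
  unfolding coset_def by (auto intro: image_eqI[of _ _ "w - y"])

lemma self_mem_coset: "y \<in> coset y"
  by (simp add: mem_coset_iff M22_zero)

lemma coset_eq_iff: "coset y = coset z \<longleftrightarrow> y - z \<in> M22"
proof
  assume "coset y = coset z"
  then show "y - z \<in> M22" using self_mem_coset[of y] mem_coset_iff by blast
next
  assume "y - z \<in> M22"
  then have "w - y \<in> M22 \<longleftrightarrow> w - z \<in> M22" for w
    using M22_diff[of "w - z" "y - z"] M22_add[of "w - y" "y - z"] by auto
  then show "coset y = coset z" unfolding set_eq_iff mem_coset_iff by blast
qed

lemma coset_eq_iff_odd_coords:
  "half_integral y \<Longrightarrow> half_integral z \<Longrightarrow> coset y = coset z \<longleftrightarrow> sym_diff (odd_coords y) (odd_coords z) \<in> glue_code"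
  by (simp add: coset_eq_iff M22_iff half_integral_diff odd_coords_diff)

lemma coset_of_mem: "w \<in> coset y \<Longrightarrow> coset w = coset y"
  by (simp add: mem_coset_iff coset_eq_iff)

section \<open>Block weights and their types\<close>

text \<open>A support whose three block weights have equal parity gives an element of the discriminant
  group; the orbits are then represented by the weights \<open>0 0 0, 0 0 4, 2 0 0, 2 2 0, 2 2 2, 1 1 1,
  1 1 3\<close>, numbered 0 to 6; all other weights get type 7.\<close>
definition weights_type :: "nat multiset \<Rightarrow> nat" where
  "weights_type W =
    (if \<forall>w\<in>#W. even w then
       (case count W 2 of 0 \<Rightarrow> if even (count W 4) then 0 else 1 | j \<Rightarrow> j + 1)
     else if \<forall>w\<in>#W. odd w then (if sum_mset W mod 4 = 3 then 5 else 6)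
     else 7)"

definition type_weights :: "nat \<Rightarrow> nat list" where
  "type_weights t = [[0, 0, 0], [0, 0, 4], [2, 0, 0], [2, 2, 0], [2, 2, 2], [1, 1, 1], [1, 1, 3]] ! t"

lemma le_4_cases: "(a :: nat) \<le> 4 \<longleftrightarrow> a = 0 \<or> a = 1 \<or> a = 2 \<or> a = 3 \<or> a = 4"
  by auto

lemma weights_type_less_7_iff:
  "a \<le> 4 \<Longrightarrow> b \<le> 4 \<Longrightarrow> c \<le> 4 \<Longrightarrow> weights_type {#a, b, c#} < 7 \<longleftrightarrow> even (a + b) \<and> even (b + c)"
  unfolding le_4_cases by (elim disjE) (simp_all add: weights_type_def)

lemma weights_type_complement:
  "a \<le> 4 \<Longrightarrow> b \<le> 4 \<Longrightarrow> c \<le> 4 \<Longrightarrow> weights_type {#a, 4 - b, 4 - c#} = weights_type {#a, b, c#}"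
  unfolding le_4_cases by (elim disjE) (simp_all add: weights_type_def)

lemma weights_type_sum_mod_4:
  "a \<le> 4 \<Longrightarrow> b \<le> 4 \<Longrightarrow> c \<le> 4 \<Longrightarrow> weights_type {#a, b, c#} < 7 \<Longrightarrow>
    (a + b + c) mod 4 = [0, 0, 2, 0, 2, 3, 1] ! weights_type {#a, b, c#}"
  unfolding le_4_cases by (elim disjE) (simp_all add: weights_type_def)

text \<open>For \<open>k < 3\<close> the two blocks other than \<open>k\<close> are complemented (a nonzero glue word is added);
  \<open>k = 3\<close> leaves the weights unchanged.\<close>
lemma weights_type_normal_form:
  "a \<le> 4 \<Longrightarrow> b \<le> 4 \<Longrightarrow> c \<le> 4 \<Longrightarrow> weights_type {#a, b, c#} < 7 \<Longrightarrow>
    \<exists>k\<in>{0, 1, 2, 3}. mset (map (\<lambda>l. if k = 3 \<or> l = k then [a, b, c] ! l else 4 - [a, b, c] ! l) [0, 1, 2])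
      = mset (type_weights (weights_type {#a, b, c#}))"
  unfolding le_4_cases by (elim disjE) (simp_all add: weights_type_def type_weights_def)

definition block_weight :: "12 set \<Rightarrow> nat \<Rightarrow> nat" where
  "block_weight S k = card {i \<in> S. block i = k}"

definition support_type :: "12 set \<Rightarrow> nat" where
  "support_type S = weights_type (mset (map (block_weight S) [0, 1, 2]))"

lemma block_weight_le_4: "block_weight S k \<le> 4"
proof (cases "k < 3")
  case True
  then show ?thesis
    unfolding block_weight_def using card_mono[of "{i. block i = k}" "{i \<in> S. block i = k}"] card_block
    by fastforce
next
  case False
  then have "block i \<noteq> k" for i using block_less_3[of i] by simp
  then show ?thesis by (simp add: block_weight_def)
qed

lemma card_eq_sum_block_weight:
  assumes "finite K"
  shows "card {i \<in> S. block i \<in> K} = (\<Sum>k\<in>K. block_weight S k)"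
proof -
  have "block ` {i \<in> S. block i \<in> K} \<subseteq> K" by auto
  from sum.group[OF _ assms this, of "\<lambda>_. 1 :: nat"]
  have "(\<Sum>k\<in>K. card {i \<in> {i \<in> S. block i \<in> K}. block i = k}) = card {i \<in> S. block i \<in> K}"
    by simp
  moreover have "{i \<in> {i \<in> S. block i \<in> K}. block i = k} = {i \<in> S. block i = k}" if "k \<in> K" for k
    using that by auto
  ultimately show ?thesis unfolding block_weight_def by simp
qed

lemma support_type_less_7_iff:
  "support_type S < 7 \<longleftrightarrow> even (block_weight S 0 + block_weight S 1) \<and> even (block_weight S 1 + block_weight S 2)"
  unfolding support_type_def using weights_type_less_7_iff block_weight_le_4 by simp

lemma M22dual_iff_support_type: "y \<in> M22dual \<longleftrightarrow> half_integral y \<and> support_type (odd_coords y) < 7"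
proof -
  have "block i \<noteq> 2 \<longleftrightarrow> block i \<in> {0, 1}" "block i \<noteq> 0 \<longleftrightarrow> block i \<in> {1, 2}" for i
    using block_less_3[of i] by auto
  then have "{i \<in> S. block i \<noteq> 2} = {i \<in> S. block i \<in> {0, 1}}" "{i \<in> S. block i \<noteq> 0} = {i \<in> S. block i \<in> {1, 2}}"
    for S by blast+
  then have "card {i \<in> S. block i \<noteq> 2} = block_weight S 0 + block_weight S 1"
    "card {i \<in> S. block i \<noteq> 0} = block_weight S 1 + block_weight S 2" for S
    by (simp_all only: card_eq_sum_block_weight finite_insert finite.emptyI) simp_all
  then show ?thesis unfolding M22dual_iff support_type_less_7_iff by presburger
qed

lemma block_weight_sym_diff_glue:
  assumes "k < 3" "l < 3"
  shows "block_weight (sym_diff S {i. block i \<noteq> k}) l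
    = (if l = k then block_weight S l else 4 - block_weight S l)"
proof (cases "l = k")
  case False
  then have "{i \<in> sym_diff S {i. block i \<noteq> k}. block i = l} = {i. block i = l} - {i \<in> S. block i = l}"
    by auto
  moreover have "card ({i. block i = l} - {i \<in> S. block i = l}) = 4 - card {i \<in> S. block i = l}"
    using card_Diff_subset[of "{i \<in> S. block i = l}" "{i. block i = l}"] card_block[OF assms(2)] by auto
  ultimately show ?thesis using False by (simp add: block_weight_def)
qed (auto simp: block_weight_def intro: arg_cong[where f = card])

lemma support_type_sym_diff_glue:
  assumes "c \<in> glue_code"
  shows "support_type (sym_diff S c) = support_type S"
proof (cases "c = {}")
  case False
  then obtain k where k: "k < 3" "c = {i. block i \<noteq> k}"
    using assms unfolding glue_code_def by blast
  let ?w = "block_weight S"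
  have w: "map (block_weight (sym_diff S c)) [0, 1, 2] = map (\<lambda>l. if l = k then ?w l else 4 - ?w l) [0, 1, 2]"
    using block_weight_sym_diff_glue[OF k(1)] k(2) by simp
  have "k = 0 \<or> k = 1 \<or> k = 2" using k(1) by auto
  then show ?thesis
    unfolding support_type_def w
    using weights_type_complement[OF block_weight_le_4 block_weight_le_4 block_weight_le_4]
    by (elim disjE) (simp_all add: add_mset_commute)
qed simp

section \<open>Isometries permute the blocks\<close>

definition permutes_blocks :: "(12 \<Rightarrow> 12) \<Rightarrow> bool" where
  "permutes_blocks \<sigma> \<longleftrightarrow> bij \<sigma> \<and> (\<forall>i j. block (\<sigma> i) = block (\<sigma> j) \<longleftrightarrow> block i = block j)"

lemma permutes_blocks_inv:
  assumes "permutes_blocks \<sigma>"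
  shows "permutes_blocks (inv \<sigma>)"
proof -
  have bij: "bij \<sigma>" and same_block: "\<And>i j. block (\<sigma> i) = block (\<sigma> j) \<longleftrightarrow> block i = block j"
    using assms by (simp_all add: permutes_blocks_def)
  have "\<sigma> (inv \<sigma> i) = i" for i using bij by (simp add: bij_is_surj surj_f_inv_f)
  then have "block (inv \<sigma> i) = block (inv \<sigma> j) \<longleftrightarrow> block i = block j" for i j
    using same_block[of "inv \<sigma> i" "inv \<sigma> j"] by simp
  then show ?thesis using bij by (simp add: permutes_blocks_def bij_imp_bij_inv)
qed

lemma permutes_blocks_induced:
  assumes "permutes_blocks \<sigma>"
  obtains \<beta> where "inj_on \<beta> {..<3}" "\<beta> ` {..<3} = {..<3}" "\<And>i. block (\<sigma> i) = \<beta> (block i)"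
proof
  define \<beta> where "\<beta> k = block (\<sigma> (SOME i. block i = k))" for k
  have same_block: "block (\<sigma> i) = block (\<sigma> j) \<longleftrightarrow> block i = block j" for i j
    using assms by (simp add: permutes_blocks_def)
  show induced: "block (\<sigma> i) = \<beta> (block i)" for i
  proof -
    have "block (SOME j. block j = block i) = block i" by (rule someI) (rule refl)
    then show ?thesis unfolding \<beta>_def using same_block by simp
  qed
  show inj: "inj_on \<beta> {..<3}"
  proof (rule inj_onI)
    fix k l assume "k \<in> {..<3}" "l \<in> {..<3}" "\<beta> k = \<beta> l"
    moreover obtain i j where "block i = k" "block j = l"
      using block_surj \<open>k \<in> {..<3}\<close> \<open>l \<in> {..<3}\<close> by (meson lessThan_iff)
    ultimately show "k = l" using induced same_block by metis
  qed
  have "\<beta> k < 3" if "k < 3" for k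
    using block_surj[OF that] induced block_less_3 by metis
  then have "\<beta> ` {..<3} \<subseteq> {..<3}" by auto
  then show "\<beta> ` {..<3} = {..<3}" using inj by (simp add: endo_inj_surj)
qed

lemma block_weight_image:
  assumes "permutes_blocks \<sigma>" "inj_on \<beta> {..<3}" "\<And>i. block (\<sigma> i) = \<beta> (block i)" "k < 3"
  shows "block_weight (\<sigma> ` S) (\<beta> k) = block_weight S k"
proof -
  have "block i = k \<longleftrightarrow> \<beta> (block i) = \<beta> k" for i
    using assms(2,4) block_less_3[of i] by (auto dest: inj_onD)
  then have "{j \<in> \<sigma> ` S. block j = \<beta> k} = \<sigma> ` {i \<in> S. block i = k}"
    using assms(3) by auto
  moreover have "inj \<sigma>" using assms(1) by (simp add: permutes_blocks_def bij_is_inj)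
  ultimately show ?thesis unfolding block_weight_def by (simp add: card_image inj_on_subset)
qed

lemma support_type_image:
  assumes "permutes_blocks \<sigma>"
  shows "support_type (\<sigma> ` S) = support_type S"
proof -
  obtain \<beta> where \<beta>: "inj_on \<beta> {..<3}" "\<beta> ` {..<3} = {..<3}" "\<And>i. block (\<sigma> i) = \<beta> (block i)"
    using permutes_blocks_induced[OF assms] by blast
  have three: "{..<3 :: nat} = {0, 1, 2}" by auto
  have "map (block_weight S) [0, 1, 2] = map (block_weight (\<sigma> ` S)) (map \<beta> [0, 1, 2])"
    using block_weight_image[OF assms \<beta>(1,3)] by simp
  moreover have "mset (map \<beta> [0, 1, 2]) = mset [0, 1, 2]"
    using \<beta>(1,2) unfolding three
    by (subst set_eq_iff_mset_eq_distinct[symmetric]) (simp_all add: inj_on_def)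
  ultimately show ?thesis
    unfolding support_type_def by (metis mset_map)
qed

lemma image_glue_code:
  assumes "permutes_blocks \<sigma>" "c \<in> glue_code"
  shows "\<sigma> ` c \<in> glue_code"
proof (cases "c = {}")
  case False
  then obtain k where k: "k < 3" "c = {i. block i \<noteq> k}"
    using assms(2) unfolding glue_code_def by blast
  obtain \<beta> where \<beta>: "inj_on \<beta> {..<3}" "\<beta> ` {..<3} = {..<3}" "\<And>i. block (\<sigma> i) = \<beta> (block i)"
    using permutes_blocks_induced[OF assms(1)] by blast
  have iff: "block (\<sigma> i) = \<beta> k \<longleftrightarrow> block i = k" for i
    using inj_on_eq_iff[OF \<beta>(1)] block_less_3[of i] k(1) \<beta>(3)[of i] by simp
  have "surj \<sigma>" using assms(1) by (simp add: permutes_blocks_def bij_is_surj)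
  have "\<sigma> ` c = {j. block j \<noteq> \<beta> k}"
  proof (intro equalityI subsetI)
    fix j assume "j \<in> \<sigma> ` c"
    then show "j \<in> {j. block j \<noteq> \<beta> k}" using iff k(2) by auto
  next
    fix j assume j: "j \<in> {j. block j \<noteq> \<beta> k}"
    obtain i where "j = \<sigma> i" using \<open>surj \<sigma>\<close> by (rule surjE)
    then show "j \<in> \<sigma> ` c" using iff j k(2) by auto
  qed
  moreover have "\<beta> k < 3" using \<beta>(2) k(1) by auto
  ultimately show ?thesis by (simp add: block_complement_in_glue_code)
qed (simp add: glue_code_def)

lemma permutes_blocks_if_preserves_glue_code:
  assumes "bij \<sigma>" "\<And>c. c \<in> glue_code \<Longrightarrow> \<sigma> ` c \<in> glue_code"
  shows "permutes_blocks \<sigma>"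
proof -
  have "inj \<sigma>" using assms(1) by (simp add: bij_is_inj)
  have "finite glue_code" using card_glue_code by (simp add: card_ge_0_finite)
  moreover have "(`) \<sigma> ` glue_code \<subseteq> glue_code" using assms(2) by blast
  moreover have "inj_on ((`) \<sigma>) glue_code"
    using \<open>inj \<sigma>\<close> by (simp add: inj_on_def inj_image_eq_iff)
  ultimately have onto: "(`) \<sigma> ` glue_code = glue_code" by (rule endo_inj_surj)
  have "block (\<sigma> i) = block (\<sigma> j) \<longleftrightarrow> (\<forall>c\<in>(`) \<sigma> ` glue_code. \<sigma> i \<in> c \<longleftrightarrow> \<sigma> j \<in> c)" for i j
    unfolding onto by (rule same_block_iff_glue_code)
  also have "\<dots> i j \<longleftrightarrow> block i = block j" for i j
    unfolding same_block_iff_glue_code by (simp add: inj_image_mem_iff[OF \<open>inj \<sigma>\<close>])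
  finally show ?thesis using assms(1) by (simp add: permutes_blocks_def)
qed

definition perm_matrix :: "('n \<Rightarrow> 'n) \<Rightarrow> rat^'n^'n" where
  "perm_matrix \<sigma> = (\<chi> i j. if i = \<sigma> j then 1 else 0)"

lemma perm_matrix_apply:
  assumes "bij \<sigma>"
  shows "(perm_matrix \<sigma> *v y) $ i = y $ inv \<sigma> i"
proof -
  have "(if i = \<sigma> j then 1 else 0) * y $ j = (if j = inv \<sigma> i then y $ j else 0)" for j
    using assms by (auto simp: bij_inv_eq_iff)
  then show ?thesis by (simp add: perm_matrix_def matrix_vector_mult_def)
qed

lemma perm_matrix_inv_apply: "bij \<sigma> \<Longrightarrow> perm_matrix \<sigma> *v (perm_matrix (inv \<sigma>) *v y) = y"
  by (simp add: vec_eq_iff perm_matrix_apply bij_imp_bij_inv inv_inv_eq bij_is_surj surj_f_inv_f)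

lemma odd_coords_perm_matrix: "bij \<sigma> \<Longrightarrow> odd_coords (perm_matrix \<sigma> *v y) = \<sigma> ` odd_coords y"
  by (simp add: odd_coords_def perm_matrix_apply bij_image_Collect_eq)

lemma half_integral_perm_matrix: "bij \<sigma> \<Longrightarrow> half_integral y \<Longrightarrow> half_integral (perm_matrix \<sigma> *v y)"
  by (simp add: half_integral_def perm_matrix_apply)

lemma bform_perm_matrix: "bij \<sigma> \<Longrightarrow> bform (perm_matrix \<sigma> *v x) (perm_matrix \<sigma> *v y) = bform x y"
  unfolding bform_def
  by (simp add: perm_matrix_apply sum.reindex_bij_betw[OF bij_imp_bij_inv, of \<sigma> "\<lambda>i. x $ i * y $ i"])

lemma perm_matrix_OM22:
  assumes "permutes_blocks \<sigma>"
  shows "perm_matrix \<sigma> \<in> OM22"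
proof -
  have bij: "bij \<sigma>" "bij (inv \<sigma>)"
    using assms permutes_blocks_inv by (simp_all add: permutes_blocks_def)
  have maps: "perm_matrix \<tau> *v x \<in> M22" if "permutes_blocks \<tau>" "x \<in> M22" for \<tau> x
    using that image_glue_code
    by (simp add: M22_iff permutes_blocks_def half_integral_perm_matrix odd_coords_perm_matrix)
  have "x \<in> (\<lambda>x. perm_matrix \<sigma> *v x) ` M22" if "x \<in> M22" for x
    using maps[OF permutes_blocks_inv[OF assms] that] perm_matrix_inv_apply[OF bij(1), of x] by force
  then have "(\<lambda>x. perm_matrix \<sigma> *v x) ` M22 = M22" using maps[OF assms] by blast
  then show ?thesis unfolding OM22_def using bform_perm_matrix[OF bij(1)] by blast
qed

lemma one_le_square_Ints: "(t :: rat) \<in> \<int> \<Longrightarrow> t \<noteq> 0 \<Longrightarrow> 1 \<le> t * t"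
  using Ints_nonzero_abs_ge1[of t] abs_mult_self_eq[of t] mult_mono[of 1 "\<bar>t\<bar>" 1 "\<bar>t\<bar>"] by simp

lemma card_glue_word: "k < 3 \<Longrightarrow> card {i. block i \<noteq> k} = 8"
proof -
  assume "k < 3"
  have "{i. block i \<noteq> k} = UNIV - {i. block i = k}" by auto
  then show ?thesis using card_block[OF \<open>k < 3\<close>] by (simp add: card_Diff_subset)
qed

lemma M22_root_signed_unit:
  assumes "x \<in> M22" "bform x x = -2"
  obtains k where "x $ k * x $ k = 1" "\<And>j. j \<noteq> k \<Longrightarrow> x $ j = 0"
proof -
  have norm: "(\<Sum>i\<in>UNIV. x $ i * x $ i) = 1" using assms(2) by (simp add: bform_def)
  have "odd_coords x = {}"
  proof (rule ccontr)
    assume "odd_coords x \<noteq> {}"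
    then obtain k where "k < 3" "odd_coords x = {i. block i \<noteq> k}"
      using assms(1) unfolding M22_iff glue_code_def by blast
    then have "card (odd_coords x) = 8" by (simp add: card_glue_word)
    have "1/4 \<le> x $ i * x $ i" if "i \<in> odd_coords x" for i
    proof -
      have "2 * x $ i \<in> \<int>" "2 * x $ i \<noteq> 0"
        using that M22_half_integral[OF assms(1)] by (auto simp: half_integral_def odd_coords_def)
      then show ?thesis using one_le_square_Ints[of "2 * x $ i"] by simp
    qed
    then have "(\<Sum>i\<in>odd_coords x. 1/4) \<le> (\<Sum>i\<in>odd_coords x. x $ i * x $ i)" by (rule sum_mono)
    also have "\<dots> \<le> (\<Sum>i\<in>UNIV. x $ i * x $ i)" by (rule sum_mono2) auto
    finally show False using norm \<open>card (odd_coords x) = 8\<close> by simp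
  qed
  then have integral: "x $ i \<in> \<int>" for i by (auto simp: odd_coords_def)
  define T where "T = {i. x $ i \<noteq> 0}"
  have norm_T: "(\<Sum>i\<in>T. x $ i * x $ i) = 1"
    using norm unfolding T_def by (subst sum.mono_neutral_right[symmetric]) auto
  moreover have "(\<Sum>i\<in>T. 1) \<le> (\<Sum>i\<in>T. x $ i * x $ i)"
    using integral one_le_square_Ints unfolding T_def by (intro sum_mono) auto
  ultimately have "card T \<le> 1" by simp
  moreover have "T \<noteq> {}" using norm_T by auto
  ultimately have "card T = 1" using card_0_eq[of T] by fastforce
  then obtain k where T: "T = {k}" by (rule card_1_singletonE)
  show ?thesis
  proof
    show "x $ k * x $ k = 1" using norm_T T by simp
    show "x $ j = 0" if "j \<noteq> k" for j using that T unfolding T_def by auto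
  qed
qed

lemma OM22_signed_permutation:
  assumes A: "A \<in> OM22"
  shows "\<exists>\<sigma>. inj \<sigma> \<and> (\<forall>i. A $ \<sigma> i $ i * A $ \<sigma> i $ i = 1) \<and> (\<forall>i j. j \<noteq> \<sigma> i \<longrightarrow> A $ j $ i = 0)"
proof -
  have M: "A *v x \<in> M22" if "x \<in> M22" for x using A that unfolding OM22_def by blast
  have form: "bform (A *v x) (A *v y) = bform x y" for x y using A unfolding OM22_def by blast
  have column: "(A *v axis i 1) $ k = A $ k $ i" for i k
  proof -
    have "A $ k $ j * axis i 1 $ j = (if j = i then A $ k $ i else 0)" for j by (simp add: axis_def)
    then show ?thesis by (simp add: matrix_vector_mult_def)
  qed
  have "\<exists>k. A $ k $ i * A $ k $ i = 1 \<and> (\<forall>j. j \<noteq> k \<longrightarrow> A $ j $ i = 0)" for i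
  proof -
    have "bform (A *v axis i 1) (A *v axis i 1) = -2" by (simp add: form bform_axis)
    from M22_root_signed_unit[OF M[OF axis_M22] this]
    obtain k where "(A *v axis i 1) $ k * (A *v axis i 1) $ k = 1" "\<And>j. j \<noteq> k \<Longrightarrow> (A *v axis i 1) $ j = 0"
      by blast
    then show ?thesis unfolding column by blast
  qed
  then have "\<forall>i. \<exists>k. A $ k $ i * A $ k $ i = 1 \<and> (\<forall>j. j \<noteq> k \<longrightarrow> A $ j $ i = 0)" by blast
  then have "\<exists>\<sigma>. \<forall>i. A $ \<sigma> i $ i * A $ \<sigma> i $ i = 1 \<and> (\<forall>j. j \<noteq> \<sigma> i \<longrightarrow> A $ j $ i = 0)"
    by (rule choice)
  then obtain \<sigma> where \<sigma>: "\<And>i. A $ \<sigma> i $ i * A $ \<sigma> i $ i = 1" "\<And>i j. j \<noteq> \<sigma> i \<Longrightarrow> A $ j $ i = 0"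
    by blast
  have "inj \<sigma>"
  proof (rule injI, rule ccontr)
    fix i j assume same: "\<sigma> i = \<sigma> j" and "i \<noteq> j"
    define c where "c = A $ \<sigma> i $ i * A $ \<sigma> i $ j"
    have "A $ k $ i * A $ k $ j = (if k = \<sigma> i then c else 0)" for k
      using \<sigma>(2)[of k i] by (auto simp: c_def)
    then have "bform (A *v axis i 1) (A *v axis j 1) = - 2 * c"
      by (simp add: bform_def column)
    moreover have "bform (A *v axis i 1) (A *v axis j 1) = 0"
      using \<open>i \<noteq> j\<close> by (simp add: form bform_axis) (simp add: axis_def)
    moreover have "A $ \<sigma> i $ i \<noteq> 0" "A $ \<sigma> i $ j \<noteq> 0" using \<sigma>(1)[of i] \<sigma>(1)[of j] same by auto
    ultimately show False by (simp add: c_def)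
  qed
  then show ?thesis using \<sigma> by blast
qed

lemma OM22_odd_coords:
  assumes A: "A \<in> OM22"
  shows "\<exists>\<sigma>. permutes_blocks \<sigma> \<and> (\<forall>y. odd_coords (A *v y) = \<sigma> ` odd_coords y)"
proof -
  obtain \<sigma> where "inj \<sigma>" and \<sigma>: "\<And>i. A $ \<sigma> i $ i * A $ \<sigma> i $ i = 1" "\<And>i j. j \<noteq> \<sigma> i \<Longrightarrow> A $ j $ i = 0"
    using OM22_signed_permutation[OF A] by blast
  then have "bij \<sigma>" by (simp add: bij_def finite_UNIV_inj_surj)
  have entry: "(A *v y) $ \<sigma> i = A $ \<sigma> i $ i * y $ i" for y i
  proof -
    define c where "c = A $ \<sigma> i $ i * y $ i"
    have "A $ \<sigma> i $ j * y $ j = (if j = i then c else 0)" for j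
      using \<sigma>(2)[of "\<sigma> i" j] \<open>inj \<sigma>\<close> by (auto simp: c_def dest: injD)
    then have "(A *v y) $ \<sigma> i = c" by (simp add: matrix_vector_mult_def)
    then show ?thesis by (simp add: c_def)
  qed
  have sign: "A $ \<sigma> i $ i = 1 \<or> A $ \<sigma> i $ i = -1" for i
    using \<sigma>(1)[of i] by (metis mult_cancel_right1 square_eq_1_iff)
  have "(A *v y) $ \<sigma> i \<in> \<int> \<longleftrightarrow> y $ i \<in> \<int>" for y i
    using sign[of i] by (elim disjE) (simp_all add: entry)
  then have "(A *v y) $ i \<in> \<int> \<longleftrightarrow> y $ inv \<sigma> i \<in> \<int>" for y i
    using \<open>bij \<sigma>\<close> by (metis bij_is_surj surj_f_inv_f)
  then have odd: "odd_coords (A *v y) = \<sigma> ` odd_coords y" for y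
    using \<open>bij \<sigma>\<close> unfolding odd_coords_def by (simp add: bij_image_Collect_eq)
  have "\<sigma> ` c \<in> glue_code" if "c \<in> glue_code" for c
  proof -
    have "A *v half_indicator c \<in> M22" using A that M22_half_indicator unfolding OM22_def by blast
    then show ?thesis using odd[of "half_indicator c"] by (simp add: M22_iff odd_coords_half_indicator)
  qed
  then have "permutes_blocks \<sigma>" by (rule permutes_blocks_if_preserves_glue_code[OF \<open>bij \<sigma>\<close>])
  then show ?thesis using odd by blast
qed

section \<open>Transitivity on supports of the same type\<close>

lemma exists_bij_preserving_labels:
  fixes f g :: "'a :: finite \<Rightarrow> 'l"
  assumes "\<And>l. card {x. f x = l} = card {x. g x = l}"
  shows "\<exists>\<sigma>. bij \<sigma> \<and> (\<forall>x. g (\<sigma> x) = f x)"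
proof -
  have "\<forall>l. \<exists>h. bij_betw h {x. f x = l} {x. g x = l}"
    using assms by (simp add: finite_same_card_bij)
  then obtain h where h: "\<And>l. bij_betw (h l) {x. f x = l} {x. g x = l}" by metis
  define \<sigma> where "\<sigma> x = h (f x) x" for x
  have label: "g (\<sigma> x) = f x" for x
    using bij_betw_apply[OF h[of "f x"]] by (simp add: \<sigma>_def)
  have "inj \<sigma>"
  proof (rule injI)
    fix x y assume "\<sigma> x = \<sigma> y"
    moreover from this have "f x = f y" using label by metis
    ultimately show "x = y"
      using bij_betw_imp_inj_on[OF h[of "f x"]] unfolding \<sigma>_def by (auto dest: inj_onD)
  qed
  then have "bij \<sigma>" by (simp add: bij_def finite_UNIV_inj_surj)
  then show ?thesis using label by blast
qed

lemma length_type_weights: "t < 7 \<Longrightarrow> length (type_weights t) = 3"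
  by (simp add: type_weights_def less_Suc_eq numeral_eq_Suc) (elim disjE; simp)

lemma support_normal_form:
  assumes "support_type S < 7"
  shows "\<exists>c p. c \<in> glue_code \<and> p permutes {..<3}
    \<and> (\<forall>l<3. block_weight (sym_diff S c) l = type_weights (support_type S) ! p l)"
proof -
  let ?w = "block_weight S" and ?t = "support_type S"
  have type: "?t = weights_type {#?w 0, ?w 1, ?w 2#}" by (simp add: support_type_def)
  have "weights_type {#?w 0, ?w 1, ?w 2#} < 7" using assms type by simp
  from weights_type_normal_form[OF block_weight_le_4[of S 0] block_weight_le_4[of S 1]
      block_weight_le_4[of S 2] this, folded type]
  obtain k where k: "k \<in> {0, 1, 2, 3}"
    "mset (map (\<lambda>l. if k = 3 \<or> l = k then [?w 0, ?w 1, ?w 2] ! l else 4 - [?w 0, ?w 1, ?w 2] ! l) [0, 1, 2])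
      = mset (type_weights ?t)"
    by blast
  define c where "c = (if k = 3 then {} else {i. block i \<noteq> k})"
  have "c \<in> glue_code"
  proof (cases "k = 3")
    case False
    with k(1) have "k < 3" by auto
    then show ?thesis using False by (simp add: c_def block_complement_in_glue_code)
  qed (simp add: c_def glue_code_def)
  have "block_weight (sym_diff S c) l = (if k = 3 \<or> l = k then ?w l else 4 - ?w l)" if "l < 3" for l
    using block_weight_sym_diff_glue[of k l S] that k(1) by (auto simp: c_def)
  then have "map (block_weight (sym_diff S c)) [0, 1, 2]
      = map (\<lambda>l. if k = 3 \<or> l = k then [?w 0, ?w 1, ?w 2] ! l else 4 - [?w 0, ?w 1, ?w 2] ! l) [0, 1, 2]"
    by simp
  then have "mset (map (block_weight (sym_diff S c)) [0, 1, 2]) = mset (type_weights ?t)"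
    using k(2) by (simp only:)
  from mset_eq_permutation[OF this] obtain p where p: "p permutes {..<length (type_weights ?t)}"
    "permute_list p (type_weights ?t) = map (block_weight (sym_diff S c)) [0, 1, 2]"
    by blast
  have "block_weight (sym_diff S c) l = type_weights ?t ! p l" if "l < 3" for l
  proof -
    have "block_weight (sym_diff S c) l = map (block_weight (sym_diff S c)) [0, 1, 2] ! l"
      using that by (simp add: less_Suc_eq numeral_eq_Suc) (elim disjE; simp)
    also have "\<dots> = type_weights ?t ! p l"
      unfolding p(2)[symmetric] using permute_list_nth[OF p(1)] that length_type_weights[OF assms] by simp
    finally show ?thesis .
  qed
  moreover have "p permutes {..<3}" using p(1) length_type_weights[OF assms] by simp
  ultimately show ?thesis using \<open>c \<in> glue_code\<close> by blast
qed

lemma card_block_relabelled: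
  assumes "p permutes {..<3}"
  shows "card {i. (i \<in> X) = b \<and> p (block i) = m}
    = (if m < 3 then (if b then block_weight X (inv p m) else 4 - block_weight X (inv p m)) else 0)"
proof (cases "m < 3")
  case True
  let ?l = "inv p m"
  have "?l < 3" using True permutes_inv[OF assms] permutes_in_image by fastforce
  have "p (block i) = m \<longleftrightarrow> block i = ?l" for i using permutes_inv_eq[OF assms] by metis
  then have eq: "{i. (i \<in> X) = b \<and> p (block i) = m} = {i. (i \<in> X) = b \<and> block i = ?l}" by auto
  show ?thesis
  proof (cases b)
    case False
    have "{i. i \<notin> X \<and> block i = ?l} = {i. block i = ?l} - {i \<in> X. block i = ?l}" by auto
    then have "card {i. i \<notin> X \<and> block i = ?l} = 4 - block_weight X ?l"
      using card_Diff_subset[of "{i \<in> X. block i = ?l}" "{i. block i = ?l}"] card_block[OF \<open>?l < 3\<close>]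
      by (auto simp: block_weight_def)
    then show ?thesis using eq True False by simp
  qed (use eq True in \<open>simp add: block_weight_def\<close>)
next
  case False
  have "p (block i) < 3" for i using permutes_in_image[OF assms] block_less_3[of i] by simp
  then show ?thesis using False by (metis (mono_tags, lifting) card.empty empty_Collect_eq)
qed

lemma support_normal_form_fibres:
  assumes "support_type S < 7"
  shows "\<exists>c p. c \<in> glue_code \<and> p permutes {..<3} \<and> (\<forall>b m.
    card {i. (i \<in> sym_diff S c, p (block i)) = (b, m)} = (if m < 3 then
      if b then type_weights (support_type S) ! m else 4 - type_weights (support_type S) ! m else 0))"
proof -
  let ?t = "support_type S"
  obtain c p where c: "c \<in> glue_code" "p permutes {..<3}"
    "\<forall>l<3. block_weight (sym_diff S c) l = type_weights ?t ! p l"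
    using support_normal_form[OF assms] by blast
  have "block_weight (sym_diff S c) (inv p m) = type_weights ?t ! m" if "m < 3" for m
  proof -
    have "inv p m < 3" using c(2) that permutes_inv permutes_in_image by fastforce
    then show ?thesis using c(3) permutes_inverses(1)[OF c(2)] by simp
  qed
  then have "card {i. (i \<in> sym_diff S c, p (block i)) = (b, m)} = (if m < 3 then
      if b then type_weights ?t ! m else 4 - type_weights ?t ! m else 0)" for b m
    using card_block_relabelled[OF c(2), of "sym_diff S c" b m] by (cases "m < 3") simp_all
  then show ?thesis using c(1,2) by blast
qed

text \<open>Both supports are brought to the normal form of their type; a bijection matching the fibres of
  the relabelled blocks then moves one onto the other.\<close>
lemma same_support_type_imp_permutes_blocks:
  assumes "support_type S < 7" "support_type S' = support_type S"
  obtains \<sigma> where "permutes_blocks \<sigma>" "sym_diff (\<sigma> ` S) S' \<in> glue_code"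
proof -
  let ?t = "support_type S"
  define normal_fibre where "normal_fibre l = (case l of (b, m) \<Rightarrow>
    if m < 3 then if b then type_weights ?t ! m else 4 - type_weights ?t ! m else 0)" for l
  obtain c p where c: "c \<in> glue_code" "p permutes {..<3}" and "\<forall>b m.
      card {i. (i \<in> sym_diff S c, p (block i)) = (b, m)} = (if m < 3 then
        if b then type_weights ?t ! m else 4 - type_weights ?t ! m else 0)"
    using support_normal_form_fibres[OF assms(1)] by blast
  then have fibres: "card {i. (i \<in> sym_diff S c, p (block i)) = l} = normal_fibre l" for l
    by (cases l) (simp add: normal_fibre_def)
  obtain c' p' where c': "c' \<in> glue_code" "p' permutes {..<3}" and "\<forall>b m.
      card {i. (i \<in> sym_diff S' c', p' (block i)) = (b, m)} = (if m < 3 then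
        if b then type_weights ?t ! m else 4 - type_weights ?t ! m else 0)"
    using support_normal_form_fibres[of S'] assms by auto
  then have fibres': "card {i. (i \<in> sym_diff S' c', p' (block i)) = l} = normal_fibre l" for l
    by (cases l) (simp add: normal_fibre_def)
  define X where "X = sym_diff S c"
  define X' where "X' = sym_diff S' c'"
  have "card {i. (i \<in> X, p (block i)) = l} = card {i. (i \<in> X', p' (block i)) = l}" for l
    unfolding X_def X'_def fibres fibres' ..
  from exists_bij_preserving_labels[OF this]
  obtain \<sigma> where "bij \<sigma>" and labels: "\<forall>i. (\<sigma> i \<in> X', p' (block (\<sigma> i))) = (i \<in> X, p (block i))"
    by blast
  have mem: "\<sigma> i \<in> X' \<longleftrightarrow> i \<in> X" and relabel: "p' (block (\<sigma> i)) = p (block i)" for i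
    using labels by simp_all
  have "block (\<sigma> i) = block (\<sigma> j) \<longleftrightarrow> p' (block (\<sigma> i)) = p' (block (\<sigma> j))" for i j
    by (simp add: inj_eq[OF permutes_inj[OF c'(2)]])
  also have "\<dots> i j \<longleftrightarrow> block i = block j" for i j
    by (simp add: relabel inj_eq[OF permutes_inj[OF c(2)]])
  finally have perm: "permutes_blocks \<sigma>"
    using \<open>bij \<sigma>\<close> by (simp add: permutes_blocks_def)
  have "\<sigma> ` X = X'"
  proof (intro equalityI subsetI)
    fix j assume "j \<in> X'"
    obtain i where "j = \<sigma> i" using bij_is_surj[OF \<open>bij \<sigma>\<close>] by (rule surjE)
    then show "j \<in> \<sigma> ` X" using mem \<open>j \<in> X'\<close> by blast
  qed (use mem in blast)
  then have "sym_diff (\<sigma> ` S) S' = sym_diff (\<sigma> ` c) c'"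
    using bij_is_inj[OF \<open>bij \<sigma>\<close>] unfolding X_def X'_def by (auto simp: image_Un image_set_diff)
  then show ?thesis
    using that perm glue_code_sym_diff[OF image_glue_code[OF perm c(1)] c'(1)] by simp
qed

section \<open>Counting\<close>

lemma card_subsets_with_fibre_cards:
  assumes "finite A" "finite K" "f ` A \<subseteq> K"
  shows "card {S. S \<subseteq> A \<and> (\<forall>k\<in>K. card {x \<in> S. f x = k} = w k)}
    = (\<Prod>k\<in>K. card {x \<in> A. f x = k} choose w k)"
proof -
  let ?F = "\<lambda>k. {T. T \<subseteq> {x \<in> A. f x = k} \<and> card T = w k}"
  let ?L = "{S. S \<subseteq> A \<and> (\<forall>k\<in>K. card {x \<in> S. f x = k} = w k)}"
  have "bij_betw (\<lambda>S. \<lambda>k\<in>K. {x \<in> S. f x = k}) ?L (Pi\<^sub>E K ?F)"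
  proof (rule bij_betw_byWitness[where f' = "\<lambda>g. \<Union>k\<in>K. g k"])
    show "\<forall>S\<in>?L. (\<Union>k\<in>K. (\<lambda>k\<in>K. {x \<in> S. f x = k}) k) = S"
      using assms(3) by auto
    show "\<forall>g\<in>Pi\<^sub>E K ?F. (\<lambda>k\<in>K. {x \<in> \<Union>k\<in>K. g k. f x = k}) = g"
    proof
      fix g assume g: "g \<in> Pi\<^sub>E K ?F"
      have "{x \<in> \<Union>l\<in>K. g l. f x = k} = g k" if "k \<in> K" for k
        using g that by (fastforce simp: PiE_iff)
      then show "(\<lambda>k\<in>K. {x \<in> \<Union>k\<in>K. g k. f x = k}) = g"
        using g by (intro ext) (simp add: PiE_iff extensional_def)
    qed
    show "(\<lambda>S. \<lambda>k\<in>K. {x \<in> S. f x = k}) ` ?L \<subseteq> Pi\<^sub>E K ?F" by auto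
    show "(\<lambda>g. \<Union>k\<in>K. g k) ` Pi\<^sub>E K ?F \<subseteq> ?L"
    proof
      fix S assume "S \<in> (\<lambda>g. \<Union>k\<in>K. g k) ` Pi\<^sub>E K ?F"
      then obtain g where g: "g \<in> Pi\<^sub>E K ?F" "S = (\<Union>k\<in>K. g k)" by blast
      then have "{x \<in> S. f x = k} = g k" if "k \<in> K" for k
        using that by (fastforce simp: PiE_iff)
      then show "S \<in> ?L" using g by (auto simp: PiE_iff)
    qed
  qed
  then have "card ?L = card (Pi\<^sub>E K ?F)" by (rule bij_betw_same_card)
  also have "\<dots> = (\<Prod>k\<in>K. card {x \<in> A. f x = k} choose w k)"
    using assms(1,2) by (simp add: card_PiE n_subsets)
  finally show ?thesis .
qed

definition type_count :: "nat \<Rightarrow> nat" where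
  "type_count t = (\<Sum>(a, b, c) \<in> {..4} \<times> {..4} \<times> {..4}.
     if weights_type {#a, b, c#} = t then (4 choose a) * (4 choose b) * (4 choose c) else 0)"

lemma type_count_values: "map type_count [0..<7] = [4, 4, 72, 216, 216, 256, 256]"
  unfolding type_count_def by code_simp

lemma card_supports_with_weights:
  "card {S. block_weight S 0 = a \<and> block_weight S 1 = b \<and> block_weight S 2 = c}
    = (4 choose a) * (4 choose b) * (4 choose c)"
proof -
  define w where "w k = (if k = 0 then a else if k = 1 then b else c)" for k :: nat
  have blocks: "block ` UNIV \<subseteq> {0, 1, 2}" by (rule image_subsetI) (rule block_range)
  have eq: "{S. block_weight S 0 = a \<and> block_weight S 1 = b \<and> block_weight S 2 = c}
      = {S. S \<subseteq> UNIV \<and> (\<forall>k\<in>{0, 1, 2}. card {i \<in> S. block i = k} = w k)}"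
    by (auto simp: block_weight_def w_def)
  have "card {S. S \<subseteq> UNIV \<and> (\<forall>k\<in>{0, 1, 2}. card {i \<in> S. block i = k} = w k)}
      = (\<Prod>k\<in>{0, 1, 2}. card {i \<in> UNIV. block i = k} choose w k)"
    by (rule card_subsets_with_fibre_cards[OF _ _ blocks]) simp_all
  also have "\<dots> = (4 choose a) * (4 choose b) * (4 choose c)"
    using card_block by (simp add: w_def)
  finally show ?thesis unfolding eq .
qed

lemma card_supports_of_type: "card {S. support_type S = t} = type_count t"
proof -
  let ?g = "\<lambda>S. (block_weight S 0, block_weight S 1, block_weight S 2)"
  let ?T = "{..4} \<times> {..4} \<times> {..4 :: nat}"
  have "?g ` {S. support_type S = t} \<subseteq> ?T" using block_weight_le_4 by auto
  then have "card {S. support_type S = t} = (\<Sum>w\<in>?T. card {S \<in> {S. support_type S = t}. ?g S = w})"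
    using sum.group[of "{S. support_type S = t}" ?T ?g "\<lambda>_. 1 :: nat"] by simp
  also have "\<dots> = type_count t"
    unfolding type_count_def
  proof (rule sum.cong[OF refl], clarify)
    fix a b c
    have "{S \<in> {S. support_type S = t}. ?g S = (a, b, c)}
        = (if weights_type {#a, b, c#} = t
           then {S. block_weight S 0 = a \<and> block_weight S 1 = b \<and> block_weight S 2 = c} else {})"
      by (auto simp: support_type_def)
    then show "card {S \<in> {S. support_type S = t}. ?g S = (a, b, c)}
        = (if weights_type {#a, b, c#} = t then (4 choose a) * (4 choose b) * (4 choose c) else 0)"
      using card_supports_with_weights[of a b c] by simp
  qed
  finally show ?thesis .
qed

definition coset_type :: "(rat^12) set \<Rightarrow> nat" where
  "coset_type s = support_type (odd_coords (SOME y. y \<in> s))"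

lemma mem_coset_odd_coords:
  assumes "half_integral y" "z \<in> coset y"
  shows "half_integral z" "sym_diff (odd_coords z) (odd_coords y) \<in> glue_code"
proof -
  have "z - y \<in> M22" using assms(2) by (simp add: mem_coset_iff)
  then have "half_integral (z - y + y)" using assms(1) M22_half_integral half_integral_add by blast
  then show "half_integral z" by simp
  then show "sym_diff (odd_coords z) (odd_coords y) \<in> glue_code"
    using \<open>z - y \<in> M22\<close> assms(1) by (simp add: M22_iff odd_coords_diff)
qed

lemma coset_type_coset:
  assumes "half_integral y"
  shows "coset_type (coset y) = support_type (odd_coords y)"
proof -
  let ?z = "SOME z. z \<in> coset y"
  have "?z \<in> coset y" using self_mem_coset by (rule someI)
  then have "sym_diff (odd_coords ?z) (odd_coords y) \<in> glue_code"
    using mem_coset_odd_coords[OF assms] by blast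
  moreover have "odd_coords ?z = sym_diff (odd_coords y) (sym_diff (odd_coords ?z) (odd_coords y))"
    by blast
  ultimately show ?thesis
    unfolding coset_type_def by (metis support_type_sym_diff_glue)
qed

lemma coset_half_indicator_odd_coords:
  "half_integral y \<Longrightarrow> coset (half_indicator (odd_coords y)) = coset y"
  by (simp add: coset_eq_iff_odd_coords half_integral_half_indicator odd_coords_half_indicator
      empty_in_glue_code)

lemma cosets_of_type:
  assumes "t < 7"
  shows "{s \<in> Adisc. coset_type s = t} = (\<lambda>S. coset (half_indicator S)) ` {S. support_type S = t}"
proof (intro equalityI subsetI)
  fix s assume "s \<in> {s \<in> Adisc. coset_type s = t}"
  then obtain y where "y \<in> M22dual" "s = coset y" "coset_type s = t" unfolding Adisc_def by blast
  then show "s \<in> (\<lambda>S. coset (half_indicator S)) ` {S. support_type S = t}"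
    using coset_half_indicator_odd_coords coset_type_coset M22dual_iff_support_type by auto
next
  fix s assume "s \<in> (\<lambda>S. coset (half_indicator S)) ` {S. support_type S = t}"
  then obtain S where "support_type S = t" "s = coset (half_indicator S)" by blast
  moreover have "half_indicator S \<in> M22dual"
    using \<open>support_type S = t\<close> assms
    by (simp add: M22dual_iff_support_type half_integral_half_indicator odd_coords_half_indicator)
  ultimately show "s \<in> {s \<in> Adisc. coset_type s = t}"
    unfolding Adisc_def
    by (auto simp: coset_type_coset[OF half_integral_half_indicator] odd_coords_half_indicator)
qed

lemma card_supports_in_coset:
  assumes "support_type S = t"
  shows "card {S'. support_type S' = t \<and> coset (half_indicator S') = coset (half_indicator S)} = 4"
proof -
  have "{S'. support_type S' = t \<and> coset (half_indicator S') = coset (half_indicator S)}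
      = (\<lambda>c. sym_diff S c) ` glue_code"
  proof (intro equalityI subsetI)
    fix S' assume "S' \<in> {S'. support_type S' = t \<and> coset (half_indicator S') = coset (half_indicator S)}"
    then have "sym_diff S' S \<in> glue_code"
      by (simp add: coset_eq_iff_odd_coords half_integral_half_indicator odd_coords_half_indicator)
    moreover have "S' = sym_diff S (sym_diff S' S)" by blast
    ultimately show "S' \<in> (\<lambda>c. sym_diff S c) ` glue_code" by blast
  next
    fix S' assume "S' \<in> (\<lambda>c. sym_diff S c) ` glue_code"
    then obtain c where "c \<in> glue_code" "S' = sym_diff S c" by blast
    moreover have "sym_diff (sym_diff S c) S = c" by blast
    ultimately show "S' \<in> {S'. support_type S' = t \<and> coset (half_indicator S') = coset (half_indicator S)}"
      using assms support_type_sym_diff_glue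
      by (simp add: coset_eq_iff_odd_coords half_integral_half_indicator odd_coords_half_indicator)
  qed
  moreover have "inj (\<lambda>c. sym_diff S c)" by (rule injI) blast
  ultimately show ?thesis by (simp add: card_image inj_on_subset card_glue_code)
qed

lemma card_cosets_of_type:
  assumes "t < 7"
  shows "4 * card {s \<in> Adisc. coset_type s = t} = type_count t"
proof -
  let ?D = "{S. support_type S = t}" and ?A = "{s \<in> Adisc. coset_type s = t}"
  let ?\<Phi> = "\<lambda>S. coset (half_indicator S)"
  have "finite ?A" unfolding cosets_of_type[OF assms] by simp
  have "card ?D = (\<Sum>s\<in>?A. card {S \<in> ?D. ?\<Phi> S = s})"
    using sum.group[of ?D ?A ?\<Phi> "\<lambda>_. 1 :: nat"] \<open>finite ?A\<close> cosets_of_type[OF assms] by simp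
  also have "\<dots> = (\<Sum>s\<in>?A. 4)"
  proof (rule sum.cong[OF refl])
    fix s assume "s \<in> ?A"
    then obtain S where "support_type S = t" "s = ?\<Phi> S" unfolding cosets_of_type[OF assms] by blast
    then show "card {S' \<in> ?D. ?\<Phi> S' = s} = 4" using card_supports_in_coset[of S t] by simp
  qed
  finally show ?thesis using card_supports_of_type by simp
qed

section \<open>Equivalence classes are determined by the type\<close>

lemma support_type_glue_code: "c \<in> glue_code \<Longrightarrow> support_type c = 0"
  using support_type_sym_diff_glue[of c "{}"] by (simp add: support_type_def block_weight_def weights_type_def)

lemma M22_subset_M22dual: "x \<in> M22 \<Longrightarrow> x \<in> M22dual"
  by (simp add: M22_iff M22dual_iff_support_type support_type_glue_code)

lemma bform_add_right: "bform x (y + z) = bform x y + bform x z"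
  by (simp add: bform_def distrib_left sum.distrib)

lemma M22dual_coset:
  assumes "y \<in> M22dual" "z \<in> coset y"
  shows "z \<in> M22dual"
proof -
  have "z - y \<in> M22dual" using assms(2) M22_subset_M22dual by (simp add: mem_coset_iff)
  then have "bform x (y + (z - y)) \<in> \<int>" if "x \<in> M22" for x
    using assms(1) that unfolding M22dual_def bform_add_right by simp
  then show ?thesis unfolding M22dual_def by simp
qed

lemma mem_Adisc:
  assumes "s \<in> Adisc" "z \<in> s"
  shows "z \<in> M22dual" "coset z = s"
proof -
  obtain y where "y \<in> M22dual" "s = coset y" using assms(1) unfolding Adisc_def by blast
  then show "z \<in> M22dual" "coset z = s" using assms(2) M22dual_coset coset_of_mem by blast+
qed

lemma coset_type_mem:
  assumes "s \<in> Adisc" "z \<in> s"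
  shows "coset_type s = support_type (odd_coords z)"
proof -
  have "half_integral z" using mem_Adisc(1)[OF assms] by (simp add: M22dual_iff_support_type)
  then show ?thesis using coset_type_coset[of z] mem_Adisc(2)[OF assms] by simp
qed

lemma disc_class_eq:
  assumes "r \<in> Adisc"
  shows "disc_class r = {s \<in> Adisc. coset_type s = coset_type r}"
proof (intro equalityI subsetI)
  fix s assume "s \<in> disc_class r"
  then obtain A z where s: "s \<in> Adisc" "A \<in> OM22" "z \<in> r" "s = coset (A *v z)"
    unfolding disc_class_def disc_rel_def by blast
  obtain \<sigma> where "permutes_blocks \<sigma>" "odd_coords (A *v z) = \<sigma> ` odd_coords z"
    using OM22_odd_coords[OF s(2)] by blast
  moreover have "A *v z \<in> s" using s(4) self_mem_coset by simp
  ultimately have "coset_type s = coset_type r"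
    using coset_type_mem[OF s(1)] coset_type_mem[OF assms s(3)] support_type_image by simp
  then show "s \<in> {s \<in> Adisc. coset_type s = coset_type r}" using s(1) by simp
next
  fix s assume "s \<in> {s \<in> Adisc. coset_type s = coset_type r}"
  then have s: "s \<in> Adisc" "coset_type s = coset_type r" by auto
  obtain y z where y: "y \<in> M22dual" "r = coset y" and z: "z \<in> M22dual" "s = coset z"
    using assms s(1) unfolding Adisc_def by blast
  have hy: "half_integral y" and hz: "half_integral z"
    using y(1) z(1) by (simp_all add: M22dual_iff_support_type)
  have "support_type (odd_coords y) < 7" using y(1) by (simp add: M22dual_iff_support_type)
  moreover have "support_type (odd_coords z) = support_type (odd_coords y)"
    using s(2) y(2) z(2) coset_type_coset hy hz by simp
  ultimately obtain \<sigma> where \<sigma>: "permutes_blocks \<sigma>"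
    "sym_diff (\<sigma> ` odd_coords y) (odd_coords z) \<in> glue_code"
    by (rule same_support_type_imp_permutes_blocks)
  have "bij \<sigma>" using \<sigma>(1) by (simp add: permutes_blocks_def)
  then have "coset (perm_matrix \<sigma> *v y) = s"
    using \<sigma>(2) z(2) hy hz
    by (simp add: coset_eq_iff_odd_coords half_integral_perm_matrix odd_coords_perm_matrix)
  moreover have "y \<in> r" using y(2) self_mem_coset by simp
  ultimately have "disc_rel r s"
    unfolding disc_rel_def using perm_matrix_OM22[OF \<sigma>(1)] by metis
  then show "s \<in> disc_class r" using s(1) by (simp add: disc_class_def)
qed

section \<open>Orders and the discriminant form\<close>

lemma elem_ord_Adisc:
  assumes "s \<in> Adisc" "s \<noteq> coset 0"
  shows "elem_ord s = 2"
  unfolding elem_ord_def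
proof (rule Least_equality)
  have "of_nat 2 *s y \<in> M22" if "y \<in> s" for y
  proof -
    have "half_integral y" using mem_Adisc(1)[OF assms(1) that] by (simp add: M22dual_iff_support_type)
    then have "(of_nat 2 *s y) $ i \<in> \<int>" for i by (simp add: half_integral_def)
    then have "half_integral (of_nat 2 *s y)" "odd_coords (of_nat 2 *s y) = {}"
      by (simp_all add: half_integral_if_Ints odd_coords_def)
    then show ?thesis by (simp add: M22_iff empty_in_glue_code)
  qed
  then show "0 < (2 :: nat) \<and> (\<forall>y\<in>s. of_nat 2 *s y \<in> M22)" by simp
next
  fix m :: nat assume m: "0 < m \<and> (\<forall>y\<in>s. of_nat m *s y \<in> M22)"
  show "2 \<le> m"
  proof (rule ccontr)
    assume "\<not> 2 \<le> m"
    with m have "m = 1" by simp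
    obtain y where "y \<in> M22dual" "s = coset y" using assms(1) unfolding Adisc_def by blast
    then have "y \<in> M22" using m \<open>m = 1\<close> self_mem_coset by simp
    then show False using assms(2) \<open>s = coset y\<close> by (simp add: coset_eq_iff)
  qed
qed

lemma mod2_add_even: "mod2 (x + 2 * of_int k) = mod2 x"
proof -
  have "\<lfloor>(x + 2 * of_int k) / 2\<rfloor> = \<lfloor>x / 2\<rfloor> + k"
    using floor_add_int[of "x / 2" k] by (simp add: add_divide_distrib)
  then show ?thesis unfolding mod2_def by simp
qed

lemma mod2_neg_half: "mod2 (- of_nat n / 2) = mod2 (- of_nat (n mod 4) / 2)"
proof -
  have "rat_of_nat n = rat_of_nat (n mod 4 + 4 * (n div 4))" by (simp only: mod_mult_div_eq)
  also have "\<dots> = of_nat (n mod 4) + 4 * of_nat (n div 4)"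
    by (simp only: of_nat_add of_nat_mult of_nat_numeral)
  finally have "- of_nat n / 2 = - of_nat (n mod 4) / 2 + 2 * (of_int (- int (n div 4)) :: rat)"
    by (simp add: field_simps)
  then show ?thesis by (simp only: mod2_add_even)
qed

lemma double_square_half_integer:
  fixes t :: rat
  assumes "2 * t \<in> \<int>"
  shows "\<exists>k. 2 * t * t = (if t \<in> \<int> then 0 else 1/2) + 2 * of_int k"
proof -
  obtain s where "2 * t = of_int s" using assms by (auto elim: Ints_cases)
  then have s: "t = of_int s / 2" by simp
  show ?thesis
  proof (cases "even s")
    case True
    then obtain u where "s = 2 * u" by blast
    then have "t = of_int u" using s by simp
    then show ?thesis by (intro exI[of _ "u * u"]) simp
  next
    case False
    then obtain u where "s = 2 * u + 1" by (rule oddE)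
    then have t: "t = of_int u + 1/2" using s by simp
    have "t \<notin> \<int>" unfolding s Ints_half_iff using False .
    then show ?thesis by (intro exI[of _ "u * u + u"]) (simp add: t algebra_simps)
  qed
qed

lemma mod2_bform_self:
  assumes "half_integral z"
  shows "mod2 (bform z z) = mod2 (- of_nat (card (odd_coords z)) / 2)"
proof -
  have "\<forall>i. \<exists>k. 2 * z $ i * z $ i = (if z $ i \<in> \<int> then 0 else 1/2) + 2 * of_int k"
    using double_square_half_integer assms unfolding half_integral_def by blast
  from choice[OF this] obtain k
    where k: "\<forall>i. 2 * z $ i * z $ i = (if z $ i \<in> \<int> then 0 else 1/2) + 2 * of_int (k i)"
    by blast
  have "bform z z = - (\<Sum>i\<in>UNIV. 2 * z $ i * z $ i)"
    by (simp add: bform_def sum_distrib_left mult.assoc sum_negf)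
  also have "\<dots> = - (\<Sum>i\<in>UNIV. if z $ i \<in> \<int> then 0 else 1/2) - 2 * of_int (\<Sum>i\<in>UNIV. k i)"
    by (simp add: k sum.distrib sum_distrib_left)
  also have "(\<Sum>i\<in>UNIV. if z $ i \<in> \<int> then 0 else 1/2 :: rat) = of_nat (card (odd_coords z)) / 2"
    by (simp add: sum.If_cases odd_coords_def Collect_neg_eq Compl_eq_Diff_UNIV)
  finally show ?thesis using mod2_add_even[of "- of_nat (card (odd_coords z)) / 2" "- (\<Sum>i\<in>UNIV. k i)"]
    by simp
qed

lemma card_support_mod_4:
  assumes "support_type S < 7"
  shows "card S mod 4 = [0, 0, 2, 0, 2, 3, 1] ! support_type S"
proof -
  have "S = {i \<in> S. block i \<in> {0, 1, 2}}" using block_range by blast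
  then have "card S = block_weight S 0 + block_weight S 1 + block_weight S 2"
    using card_eq_sum_block_weight[of "{0, 1, 2}" S] by simp
  then show ?thesis
    using weights_type_sum_mod_4[OF block_weight_le_4 block_weight_le_4 block_weight_le_4] assms
    by (simp add: support_type_def)
qed

lemma qdisc_Adisc:
  assumes "s \<in> Adisc"
  shows "qdisc s = mod2 (- of_nat ([0, 0, 2, 0, 2, 3, 1] ! coset_type s) / 2)"
proof -
  obtain y where "y \<in> M22dual" "s = coset y" using assms unfolding Adisc_def by blast
  then have "y \<in> s" using self_mem_coset by simp
  then have z: "(SOME z. z \<in> s) \<in> s" by (rule someI)
  let ?z = "SOME z. z \<in> s"
  have "half_integral ?z" "support_type (odd_coords ?z) < 7"
    using mem_Adisc(1)[OF assms z] by (simp_all add: M22dual_iff_support_type)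
  have "qdisc s = mod2 (bform ?z ?z)" by (simp add: qdisc_def)
  also have "\<dots> = mod2 (- of_nat (card (odd_coords ?z)) / 2)"
    by (rule mod2_bform_self) fact
  also have "\<dots> = mod2 (- of_nat (card (odd_coords ?z) mod 4) / 2)"
    by (rule mod2_neg_half)
  also have "card (odd_coords ?z) mod 4 = [0, 0, 2, 0, 2, 3, 1] ! coset_type s"
    using card_support_mod_4 \<open>support_type (odd_coords ?z) < 7\<close> coset_type_mem[OF assms z] by simp
  finally show ?thesis .
qed

definition orbit_of_type :: "nat \<Rightarrow> (rat^12) set set" where
  "orbit_of_type t = {s \<in> Adisc. coset_type s = t}"

lemma card_orbit_of_type: "t < 7 \<Longrightarrow> card (orbit_of_type t) = [1, 1, 18, 54, 54, 64, 64] ! t"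
proof -
  assume "t < 7"
  then have "4 * card (orbit_of_type t) = [4, 4, 72, 216, 216, 256, 256] ! t"
    using card_cosets_of_type arg_cong[OF type_count_values, of "\<lambda>xs. xs ! t"]
    by (simp add: orbit_of_type_def)
  moreover have "t = 0 \<or> t = 1 \<or> t = 2 \<or> t = 3 \<or> t = 4 \<or> t = 5 \<or> t = 6" using \<open>t < 7\<close> by auto
  ultimately show ?thesis by (elim disjE) simp_all
qed

lemma coset_type_less_7: "s \<in> Adisc \<Longrightarrow> coset_type s < 7"
  unfolding Adisc_def using coset_type_coset M22dual_iff_support_type by auto

lemma orbit_of_type_0: "orbit_of_type 0 = {coset 0}"
proof -
  have "0 \<in> M22dual" using M22_subset_M22dual M22_zero by blast
  moreover have "coset_type (coset 0) = 0"
    using coset_type_coset[of 0] support_type_glue_code[OF empty_in_glue_code]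
    by (simp add: half_integral_def odd_coords_def)
  ultimately have "coset 0 \<in> orbit_of_type 0" unfolding orbit_of_type_def Adisc_def by blast
  moreover have "card (orbit_of_type 0) = 1" using card_orbit_of_type[of 0] by simp
  then obtain s where "orbit_of_type 0 = {s}" by (rule card_1_singletonE)
  ultimately show ?thesis by simp
qed

lemma orbit_of_type_nonempty: "t < 7 \<Longrightarrow> orbit_of_type t \<noteq> {}"
  using card_orbit_of_type[of t] by (auto simp: less_Suc_eq numeral_eq_Suc)

lemma coset_type_eq_0_iff: "s \<in> Adisc \<Longrightarrow> coset_type s = 0 \<longleftrightarrow> s = coset 0"
  using orbit_of_type_0 unfolding orbit_of_type_def by (metis (mono_tags, lifting) mem_Collect_eq singleton_iff)

lemma nontrivial_classes_eq: "nontrivial_classes = orbit_of_type ` {1..6}"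
proof (intro equalityI subsetI)
  fix C assume "C \<in> nontrivial_classes"
  then obtain r where r: "r \<in> Adisc" "r \<noteq> coset 0" "C = disc_class r"
    unfolding nontrivial_classes_def by blast
  then have "coset_type r \<in> {1..6}"
    using coset_type_less_7[OF r(1)] coset_type_eq_0_iff[OF r(1)] by auto
  moreover have "C = orbit_of_type (coset_type r)"
    using r(3) disc_class_eq[OF r(1)] by (simp add: orbit_of_type_def)
  ultimately show "C \<in> orbit_of_type ` {1..6}" by blast
next
  fix C assume "C \<in> orbit_of_type ` {1..6}"
  then obtain t where t: "t \<in> {1..6}" "C = orbit_of_type t" by blast
  then obtain r where "r \<in> orbit_of_type t" using orbit_of_type_nonempty[of t] by auto
  then have r: "r \<in> Adisc" "coset_type r = t" by (simp_all add: orbit_of_type_def)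
  then have "r \<noteq> coset 0" using t(1) coset_type_eq_0_iff[OF r(1)] by auto
  moreover have "C = disc_class r" using t(2) r disc_class_eq by (simp add: orbit_of_type_def)
  ultimately show "C \<in> nontrivial_classes" unfolding nontrivial_classes_def using r(1) by blast
qed

lemma inj_on_orbit_of_type: "inj_on orbit_of_type {1..6}"
proof (rule inj_onI)
  fix t t' assume "t \<in> {1..6}" "t' \<in> {1..6}" "orbit_of_type t = orbit_of_type t'"
  moreover obtain r where "r \<in> orbit_of_type t" using orbit_of_type_nonempty[of t] \<open>t \<in> {1..6}\<close> by auto
  ultimately show "t = t'" unfolding orbit_of_type_def by auto
qed

lemma class_triple_orbit_of_type:
  assumes "t \<in> {1..6}"
  shows "class_triple (orbit_of_type t)
    = (2, mod2 (- of_nat ([0, 0, 2, 0, 2, 3, 1] ! t) / 2), [1, 1, 18, 54, 54, 64, 64] ! t)"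
proof -
  let ?r = "SOME r. r \<in> orbit_of_type t"
  have "?r \<in> orbit_of_type t" using orbit_of_type_nonempty[of t] assms by (simp add: some_in_eq)
  then have r: "?r \<in> Adisc" "coset_type ?r = t" by (simp_all add: orbit_of_type_def)
  moreover have "?r \<noteq> coset 0" using r assms coset_type_eq_0_iff[OF r(1)] by auto
  ultimately show ?thesis
    using assms elem_ord_Adisc qdisc_Adisc card_orbit_of_type by (simp add: class_triple_def)
qed

lemma mod2_neg_half_values:
  "mod2 0 = 0" "mod2 (- (1 / 2)) = 3 / 2" "mod2 (- 1) = 1" "mod2 (- (3 / 2)) = 1 / 2"
proof -
  have "\<lfloor>(- 1 / 4 :: rat)\<rfloor> = -1" "\<lfloor>(- 1 / 2 :: rat)\<rfloor> = -1" "\<lfloor>(- 3 / 4 :: rat)\<rfloor> = -1"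
    by (simp_all add: floor_eq_iff)
  then show "mod2 0 = 0" "mod2 (- (1 / 2)) = 3 / 2" "mod2 (- 1) = 1" "mod2 (- (3 / 2)) = 1 / 2"
    by (simp_all add: mod2_def)
qed

theorem proposition3p6:
  shows "image_mset class_triple (mset_set nontrivial_classes) =
     {# (2, 0, 54), (2, 0, 1), (2, 1/2, 64), (2, 1, 54), (2, 1, 18), (2, 3/2, 64) #}"
proof -
  have "mset_set nontrivial_classes = image_mset orbit_of_type (mset_set {1..6})"
    unfolding nontrivial_classes_eq by (rule image_mset_mset_set[OF inj_on_orbit_of_type, symmetric])
  then have "image_mset class_triple (mset_set nontrivial_classes)
      = image_mset (\<lambda>t. class_triple (orbit_of_type t)) (mset_set {1..6})"
    by (simp add: image_mset.compositionality comp_def)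
  also have "\<dots> = image_mset (\<lambda>t. (2, mod2 (- of_nat ([0, 0, 2, 0, 2, 3, 1] ! t) / 2),
      [1, 1, 18, 54, 54, 64, 64] ! t)) (mset_set {1..6})"
    by (rule image_mset_cong) (simp add: class_triple_orbit_of_type)
  also have "{1..6 :: nat} = {1, 2, 3, 4, 5, 6}" by auto
  finally show ?thesis by (simp add: mod2_neg_half_values add_mset_commute)
qed

end
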